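(* Let $\mathcal{C}$ be the structure described in the context. Then for every $n\in\omega$ with $n\ge1$, the formula $\bigwedge_{i<n}R(x,y_i)$ does not witness SOP$_2$ modulo $\mathrm{Th}(\mathcal{C})$.
   Context: ${}^{\omega>}2$ is the binary tree of finite $0/1$-sequences with initial-segment order $\trianglelefteq$; ${}^{n>}2$ is the set of sequences of length $<n$. A set $X$ is an antichain if its elements are pairwise $\trianglelefteq$-incomparable; a maximal antichain in ${}^{n>}2$ is an antichain $X\subseteq{}^{n>}2$ not properly contained in another antichain of ${}^{n>}2$. The language is $\{R\}$ with $R$ binary. $\mathcal{C}$ has universe the disjoint union of $A=\{a_X: X$ a maximal antichain in ${}^{n>}2$ for some $n<\omega\}$ and $B=\{b_\eta:\eta\in{}^{\omega>}2\}$, with $R^{\mathcal{C}}=\{(a_X,b_\eta):\eta\in X\}$. A formula $\psi(x,\bar z)$ witnesses SOP$_2$ modulo a theory if in a monster model there is $\langle \bar c_\eta\rangle_{\eta\in{}^{\omega>}2}$ such that $\{\psi(x,\bar c_{\eta\lceil m}):m<\omega\}$ is consistent for each $\eta\in{}^\omega2$ and $\{\psi(x,\bar c_\eta),\psi(x,\bar c_\nu)\}$ is inconsistent for all $\trianglelefteq$-incomparable $\eta,\nu$. Here $y_0,\dots,y_{n-1}$ are distinct single variables. *)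

theory Defs
  imports Main "HOL-Library.Sublist"
begin

datatype fm =
    Tru
  | Rel nat nat
  | Eq nat nat
  | Neg fm
  | Conj fm fm
  | Ex nat fm

fun fv :: "fm \<Rightarrow> nat set" where
  "fv Tru = {}"
| "fv (Rel i j) = {i, j}"
| "fv (Eq i j) = {i, j}"
| "fv (Neg p) = fv p"
| "fv (Conj p q) = fv p \<union> fv q"
| "fv (Ex i p) = fv p - {i}"

type_synonym 'm rstruct = "'m set \<times> ('m \<Rightarrow> 'm \<Rightarrow> bool)"

fun sat :: "'m rstruct \<Rightarrow> (nat \<Rightarrow> 'm) \<Rightarrow> fm \<Rightarrow> bool" where
  "sat M e Tru = True"
| "sat M e (Rel i j) = snd M (e i) (e j)"
| "sat M e (Eq i j) = (e i = e j)"
| "sat M e (Neg p) = (\<not> sat M e p)"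
| "sat M e (Conj p q) = (sat M e p \<and> sat M e q)"
| "sat M e (Ex i p) = (\<exists>a\<in>fst M. sat M (e(i := a)) p)"

definition sentence :: "fm \<Rightarrow> bool" where
  "sentence p \<longleftrightarrow> fv p = {}"

definition true_in :: "'m rstruct \<Rightarrow> fm \<Rightarrow> bool" where
  "true_in M p \<longleftrightarrow> (\<forall>e. (\<forall>v. e v \<in> fst M) \<longrightarrow> sat M e p)"

definition Th :: "'n rstruct \<Rightarrow> fm set" where
  "Th N = {p. sentence p \<and> true_in N p}"

definition is_model_of :: "'m rstruct \<Rightarrow> fm set \<Rightarrow> bool" where
  "is_model_of M T \<longleftrightarrow> fst M \<noteq> {} \<and> (\<forall>p\<in>T. true_in M p)"

text \<open>Finite 0/1-sequences are bool lists, initial segment order is \<open>prefix\<close>;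
  elements of ${}^\omega 2$ are functions nat => bool, and \<open>restr eta m\<close> is eta restricted to m.\<close>

definition restr :: "(nat \<Rightarrow> bool) \<Rightarrow> nat \<Rightarrow> bool list" where
  "restr eta m = map eta [0..<m]"

definition incomparable :: "bool list \<Rightarrow> bool list \<Rightarrow> bool" where
  "incomparable eta nu \<longleftrightarrow> \<not> prefix eta nu \<and> \<not> prefix nu eta"

definition antichain :: "bool list set \<Rightarrow> bool" where
  "antichain X \<longleftrightarrow> (\<forall>eta\<in>X. \<forall>nu\<in>X. eta \<noteq> nu \<longrightarrow> incomparable eta nu)"

definition seqs_below :: "nat \<Rightarrow> bool list set" where
  "seqs_below n = {eta. length eta < n}"

definition maximal_antichain_in :: "bool list set \<Rightarrow> bool list set \<Rightarrow> bool" where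
  "maximal_antichain_in X S \<longleftrightarrow> X \<subseteq> S \<and> antichain X \<and>
     (\<forall>Y. X \<subset> Y \<and> Y \<subseteq> S \<longrightarrow> \<not> antichain Y)"

datatype celt = Aelt "bool list set" | Belt "bool list"

definition C_univ :: "celt set" where
  "C_univ = {Aelt X | X. \<exists>n. maximal_antichain_in X (seqs_below n)} \<union> range Belt"

fun C_rel :: "celt \<Rightarrow> celt \<Rightarrow> bool" where
  "C_rel (Aelt X) (Belt eta) = (eta \<in> X)"
| "C_rel _ _ = False"

definition C :: "celt rstruct" where
  "C = (C_univ, C_rel)"

text \<open>The formula psi(x, y_0..y_{n-1}) = conjunction over i<n of R(x, y_i), with x = v_0 and y_i = v_(i+1).\<close>
fun conjR :: "nat \<Rightarrow> fm" where
  "conjR 0 = Tru"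
| "conjR (Suc k) = Conj (conjR k) (Rel 0 (Suc k))"

definition asg :: "'m \<Rightarrow> (nat \<Rightarrow> 'm) \<Rightarrow> nat \<Rightarrow> 'm" where
  "asg a p v = (if v = 0 then a else p (v - 1))"

text \<open>psi(x, z_0..z_{n-1}) (free variables among v_0..v_n) witnesses SOP_2 in the model M via the
  tree of parameter tuples c: every branch set {psi(x,c_(eta|m)) : m} is consistent over M
  (= finitely satisfiable in M), and psi(x,c_eta), psi(x,c_nu) have no common solution for
  incomparable eta, nu.\<close>
definition sop2_witness_in ::
  "'m rstruct \<Rightarrow> fm \<Rightarrow> nat \<Rightarrow> (bool list \<Rightarrow> nat \<Rightarrow> 'm) \<Rightarrow> bool" where
  "sop2_witness_in M psi n c \<longleftrightarrow>
     (\<forall>eta i. i < n \<longrightarrow> c eta i \<in> fst M) \<and>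
     (\<forall>eta :: nat \<Rightarrow> bool. \<forall>F. finite F \<longrightarrow>
        (\<exists>a\<in>fst M. \<forall>m\<in>F. sat M (asg a (c (restr eta m))) psi)) \<and>
     (\<forall>eta nu. incomparable eta nu \<longrightarrow>
        \<not> (\<exists>a\<in>fst M. sat M (asg a (c eta)) psi \<and> sat M (asg a (c nu)) psi))"

end

(* Write compatible x y when x and y have a common R-predecessor. Two first-order
   properties of C pass to every model M of Th(C): every finite pairwise compatible set has
   a common R-predecessor (amalgamation), and an incompatible pair is pinned down by one of its
   members (sparse_incompatibility), so that between two finite cliques P and Q there are at
   most |P| + |Q| incompatible pairs. An SOP_2 tree for the conjunction of R(x, y_i), i < n,
   gives sets X_eta of at most n parameters, pairwise compatible along each branch and, by
   amalgamation, containing an incompatible pair across any two incomparable nodes.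
   Such a tree pattern does not exist, by induction on n: either below some node r every
   X_(r s) meets the parameters on the path to r, and removing these lowers n; or every node
   has an extension with fresh parameters, and two chains of such extensions through [False]
   and [True] yield N^2 incompatible pairs between two cliques of size at most N n, which is
   impossible for N = 2n + 1. *)

theory Submission
  imports Defs "HOL-Library.Disjoint_Sets"
begin

section \<open>Tree patterns of a symmetric relation\<close>

lemma incomparable_iff_parallel: "incomparable eta nu \<longleftrightarrow> eta \<parallel> nu"
  by (simp add: incomparable_def parallel_def)

definition clique :: "('a \<Rightarrow> 'a \<Rightarrow> bool) \<Rightarrow> 'a set \<Rightarrow> bool" where
  "clique K S \<longleftrightarrow> (\<forall>x\<in>S. \<forall>y\<in>S. K x y)"

definition sop2_pattern :: "('a \<Rightarrow> 'a \<Rightarrow> bool) \<Rightarrow> (bool list \<Rightarrow> 'a set) \<Rightarrow> bool" where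
  "sop2_pattern K X \<longleftrightarrow>
     (\<forall>eta nu. prefix eta nu \<longrightarrow> (\<forall>x\<in>X eta. \<forall>y\<in>X nu. K x y)) \<and>
     (\<forall>eta nu. incomparable eta nu \<longrightarrow> (\<exists>x\<in>X eta. \<exists>y\<in>X nu. \<not> K x y))"

definition few_cross_nonedges :: "('a \<Rightarrow> 'a \<Rightarrow> bool) \<Rightarrow> 'a set \<Rightarrow> bool" where
  "few_cross_nonedges K U \<longleftrightarrow> (\<forall>P Q. finite P \<longrightarrow> finite Q \<longrightarrow> P \<subseteq> U \<longrightarrow> Q \<subseteq> U \<longrightarrow>
     clique K P \<longrightarrow> clique K Q \<longrightarrow> card {(x, y) \<in> P \<times> Q. \<not> K x y} \<le> card P + card Q)"

definition path_union :: "(bool list \<Rightarrow> 'a set) \<Rightarrow> bool list \<Rightarrow> 'a set" where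
  "path_union X r = \<Union> (X ` {p. prefix p r})"

lemma sop2_pattern_shift:
  assumes sym: "\<And>x y. K x y \<Longrightarrow> K y x" and pat: "sop2_pattern K X"
  shows "sop2_pattern K (\<lambda>s. X (r @ s) - path_union X r)"
  unfolding sop2_pattern_def
proof (intro conjI allI impI ballI)
  fix s t x y
  assume "prefix s t" "x \<in> X (r @ s) - path_union X r" "y \<in> X (r @ t) - path_union X r"
  moreover have "prefix (r @ s) (r @ t)" using \<open>prefix s t\<close> by simp
  ultimately show "K x y" using pat unfolding sop2_pattern_def by blast
next
  fix s t assume "incomparable s t"
  then have "incomparable (r @ s) (r @ t)" by (simp add: incomparable_def)
  then obtain x y where xy: "x \<in> X (r @ s)" "y \<in> X (r @ t)" "\<not> K x y"
    using pat unfolding sop2_pattern_def by blast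
  have "K u v" if u: "u \<in> path_union X r" and v: "v \<in> X (r @ w)" for u v w
  proof -
    obtain p where p: "prefix p r" "u \<in> X p" using u by (auto simp: path_union_def)
    then have "prefix p (r @ w)" by simp
    with p(2) v pat show ?thesis unfolding sop2_pattern_def by blast
  qed
  with xy sym have "x \<notin> path_union X r" "y \<notin> path_union X r" by blast+
  with xy show "\<exists>x\<in>X (r @ s) - path_union X r. \<exists>y\<in>X (r @ t) - path_union X r. \<not> K x y"
    by blast
qed

lemma sop2_pattern_chain_clique:
  fixes a :: "nat \<Rightarrow> bool list"
  assumes sym: "\<And>x y. K x y \<Longrightarrow> K y x" and pat: "sop2_pattern K X"
    and chain: "\<And>i j. i \<le> j \<Longrightarrow> prefix (a i) (a j)"
  shows "clique K (\<Union>i\<in>I. X (a i))"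
  unfolding clique_def
proof (intro ballI)
  fix x y assume "x \<in> (\<Union>i\<in>I. X (a i))" "y \<in> (\<Union>i\<in>I. X (a i))"
  then obtain i j where "x \<in> X (a i)" "y \<in> X (a j)" by blast
  then show "K x y"
    using pat chain[of i j] chain[of j i] sym nat_le_linear[of i j]
    unfolding sop2_pattern_def by blast
qed

lemma disjoint_chain:
  assumes fresh: "\<And>r. \<exists>s. X (r @ s) \<inter> path_union X r = {}"
  obtains a :: "nat \<Rightarrow> bool list" where "a 0 = root" "\<And>i j. i \<le> j \<Longrightarrow> prefix (a i) (a j)"
    "disjoint_family (\<lambda>i. X (a i))"
proof -
  obtain ext where ext: "\<And>r. X (r @ ext r) \<inter> path_union X r = {}"
    using fresh by metis
  define a where "a i = ((\<lambda>r. r @ ext r) ^^ i) root" for i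
  have a_Suc: "a (Suc i) = a i @ ext (a i)" for i
    by (simp add: a_def)
  have chain: "prefix (a i) (a j)" if "i \<le> j" for i j
    by (rule prefix_order.lift_Suc_mono_le[OF _ that]) (simp add: a_Suc)
  have disj: "X (a i) \<inter> X (a j) = {}" if "i < j" for i j
  proof -
    obtain k where k: "j = Suc k" "i \<le> k" using \<open>i < j\<close> by (cases j) auto
    have "X (a i) \<subseteq> path_union X (a k)"
      using chain[OF k(2)] by (auto simp: path_union_def)
    moreover have "X (a j) \<inter> path_union X (a k) = {}"
      using ext[of "a k"] by (simp add: k(1) a_Suc)
    ultimately show ?thesis by blast
  qed
  have disjoint: "disjoint_family (\<lambda>i. X (a i))"
    unfolding disjoint_family_on_def
  proof (intro ballI impI)
    fix i j :: nat assume "i \<noteq> j"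
    then show "X (a i) \<inter> X (a j) = {}"
      using disj[of i j] disj[of j i] by (cases "i < j") auto
  qed
  have "a 0 = root" by (simp add: a_def)
  from this chain disjoint show thesis by (rule that)
qed

lemma card_cross_nonedges_ge:
  assumes "disjoint_family_on A {..<N}" "disjoint_family_on B {..<N}"
    and "\<And>i. finite (A i)" "\<And>j. finite (B j)"
    and nonedge: "\<And>i j. i < N \<Longrightarrow> j < N \<Longrightarrow> \<exists>x\<in>A i. \<exists>y\<in>B j. \<not> K x y"
  shows "N * N \<le> card {(x, y) \<in> (\<Union>i<N. A i) \<times> (\<Union>j<N. B j). \<not> K x y}"
    (is "_ \<le> card ?E")
proof -
  have "\<forall>ij\<in>{..<N} \<times> {..<N}. \<exists>p. fst p \<in> A (fst ij) \<and> snd p \<in> B (snd ij) \<and> \<not> K (fst p) (snd p)"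
    using nonedge by force
  from bchoice[OF this] obtain e where e: "\<And>ij. ij \<in> {..<N} \<times> {..<N} \<Longrightarrow>
      fst (e ij) \<in> A (fst ij) \<and> snd (e ij) \<in> B (snd ij) \<and> \<not> K (fst (e ij)) (snd (e ij))"
    by blast
  have "inj_on e ({..<N} \<times> {..<N})"
  proof (rule inj_onI)
    fix ij kl assume ij: "ij \<in> {..<N} \<times> {..<N}" and kl: "kl \<in> {..<N} \<times> {..<N}"
      and "e ij = e kl"
    then have "A (fst ij) \<inter> A (fst kl) \<noteq> {}" "B (snd ij) \<inter> B (snd kl) \<noteq> {}"
      using e[OF ij] e[OF kl] by auto
    moreover have "fst ij \<in> {..<N}" "fst kl \<in> {..<N}" "snd ij \<in> {..<N}" "snd kl \<in> {..<N}"
      using ij kl by auto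
    ultimately have "fst ij = fst kl" "snd ij = snd kl"
      using disjoint_family_onD[OF assms(1), of "fst ij" "fst kl"]
        disjoint_family_onD[OF assms(2), of "snd ij" "snd kl"] by auto
    then show "ij = kl" by (simp add: prod_eq_iff)
  qed
  moreover have "e ` ({..<N} \<times> {..<N}) \<subseteq> ?E"
  proof
    fix p assume "p \<in> e ` ({..<N} \<times> {..<N})"
    then obtain ij where "ij \<in> {..<N} \<times> {..<N}" "p = e ij" by blast
    with e[of ij] show "p \<in> ?E" by (cases p) auto
  qed
  moreover have "finite ?E"
    by (rule finite_subset[of _ "(\<Union>i<N. A i) \<times> (\<Union>j<N. B j)"]) (auto simp: assms(3,4))
  ultimately show ?thesis
    using card_inj_on_le[of e "{..<N} \<times> {..<N}" ?E] by (simp add: card_cartesian_product)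
qed

lemma card_UN_le_uniform:
  assumes "finite I" "\<And>i. i \<in> I \<Longrightarrow> card (A i) \<le> k"
  shows "card (\<Union>i\<in>I. A i) \<le> card I * k"
  using card_UN_le[OF assms(1), of A] sum_bounded_above[of I "\<lambda>i. card (A i)" k] assms(2)
  by simp

lemma no_sop2_pattern_with_fresh_extensions:
  fixes X :: "bool list \<Rightarrow> 'a set"
  assumes sym: "\<And>x y. K x y \<Longrightarrow> K y x" and sparse: "few_cross_nonedges K U"
    and X: "\<And>eta. finite (X eta)" "\<And>eta. card (X eta) \<le> k" "\<And>eta. X eta \<subseteq> U"
    and pat: "sop2_pattern K X"
    and fresh: "\<And>r. \<exists>s. X (r @ s) \<inter> path_union X r = {}"
  shows False
proof -
  obtain a :: "nat \<Rightarrow> bool list" where a: "a 0 = [False]" "\<And>i j. i \<le> j \<Longrightarrow> prefix (a i) (a j)"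
    "disjoint_family (\<lambda>i. X (a i))"
    using disjoint_chain[OF fresh, where root = "[False]"] by blast
  obtain b :: "nat \<Rightarrow> bool list" where b: "b 0 = [True]" "\<And>i j. i \<le> j \<Longrightarrow> prefix (b i) (b j)"
    "disjoint_family (\<lambda>i. X (b i))"
    using disjoint_chain[OF fresh, where root = "[True]"] by blast
  have incomparable_ab: "incomparable (a i) (b j)" for i j
  proof -
    obtain u v where "a i = False # u" "b j = True # v"
      using a(2)[of 0 i] b(2)[of 0 j] by (auto simp: a(1) b(1) elim!: prefixE)
    then show ?thesis by (simp add: incomparable_iff_parallel Cons_parallelI1)
  qed
  have nonedge: "\<exists>x\<in>X (a i). \<exists>y\<in>X (b j). \<not> K x y" for i j
    using pat incomparable_ab[of i j] unfolding sop2_pattern_def by blast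
  define N where "N = 2 * k + 1"
  define P where "P = (\<Union>i<N. X (a i))"
  define Q where "Q = (\<Union>j<N. X (b j))"
  have "N * N \<le> card {(x, y) \<in> P \<times> Q. \<not> K x y}"
    unfolding P_def Q_def
    using disjoint_family_on_mono[OF subset_UNIV a(3)] disjoint_family_on_mono[OF subset_UNIV b(3)]
    by (intro card_cross_nonedges_ge nonedge X(1))
  also have "\<dots> \<le> card P + card Q"
  proof (rule sparse[unfolded few_cross_nonedges_def, rule_format])
    show "finite P" "finite Q" "P \<subseteq> U" "Q \<subseteq> U"
      using X(1,3) by (auto simp: P_def Q_def)
    show "clique K P"
      unfolding P_def by (rule sop2_pattern_chain_clique[OF sym pat a(2)])
    show "clique K Q"
      unfolding Q_def by (rule sop2_pattern_chain_clique[OF sym pat b(2)])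
  qed
  also have "\<dots> \<le> N * k + N * k"
    unfolding P_def Q_def
    using card_UN_le_uniform[of "{..<N}", OF _ X(2)] by (intro add_mono) simp_all
  finally show False by (simp add: N_def)
qed

theorem no_bounded_sop2_pattern:
  fixes X :: "bool list \<Rightarrow> 'a set"
  assumes sym: "\<And>x y. K x y \<Longrightarrow> K y x" and sparse: "few_cross_nonedges K U"
    and "\<And>eta. finite (X eta)" "\<And>eta. card (X eta) \<le> n" "\<And>eta. X eta \<subseteq> U"
  shows "\<not> sop2_pattern K X"
  using assms(3-5)
proof (induction n arbitrary: X)
  case 0
  then have "X [False] = {}" by simp
  moreover have "incomparable [False] [True]" by (simp add: incomparable_def)
  ultimately show ?case unfolding sop2_pattern_def by blast
next
  case (Suc m)
  show ?case
  proof
    assume pat: "sop2_pattern K X"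
    consider (stuck) r where "\<And>s. X (r @ s) \<inter> path_union X r \<noteq> {}"
      | (fresh) "\<And>r. \<exists>s. X (r @ s) \<inter> path_union X r = {}"
      by blast
    then show False
    proof cases
      case stuck
      define Y where "Y s = X (r @ s) - path_union X r" for s
      have "Y s \<subset> X (r @ s)" for s
        unfolding Y_def using stuck[of s] by blast
      then have "card (Y s) < card (X (r @ s))" for s
        using Suc.prems(1) by (rule psubset_card_mono[rotated])
      then have card_Y: "card (Y s) \<le> m" for s
        using Suc.prems(2)[of "r @ s"] by (meson less_Suc_eq_le order_less_le_trans)
      have finite_Y: "finite (Y s)" and Y_U: "Y s \<subseteq> U" for s
        using Suc.prems(1,3)[of "r @ s"] by (auto simp: Y_def)
      have "\<not> sop2_pattern K Y"
        using Suc.IH[OF finite_Y card_Y Y_U] .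
      moreover have "sop2_pattern K Y"
        unfolding Y_def by (rule sop2_pattern_shift[OF sym pat])
      ultimately show False by contradiction
    next
      case fresh
      show False
        by (rule no_sop2_pattern_with_fresh_extensions[OF sym sparse Suc.prems pat fresh])
    qed
  qed
qed

section \<open>Compatibility in {R}-structures\<close>

definition compatible :: "'m rstruct \<Rightarrow> 'm \<Rightarrow> 'm \<Rightarrow> bool" where
  "compatible M x y \<longleftrightarrow> (\<exists>c\<in>fst M. snd M c x \<and> snd M c y)"

lemma compatible_sym: "compatible M x y \<Longrightarrow> compatible M y x"
  by (auto simp: compatible_def)

definition amalgamation :: "'m rstruct \<Rightarrow> bool" where
  "amalgamation M \<longleftrightarrow> (\<forall>a\<in>fst M. \<forall>y\<in>fst M. compatible M y y \<longrightarrow>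
     (\<exists>a'\<in>fst M. snd M a' y \<and> (\<forall>b\<in>fst M. snd M a b \<and> compatible M b y \<longrightarrow> snd M a' b)))"

definition sparse_incompatibility :: "'m rstruct \<Rightarrow> bool" where
  "sparse_incompatibility M \<longleftrightarrow> (\<forall>x\<in>fst M. \<forall>y\<in>fst M. \<not> compatible M x y \<longrightarrow>
     (\<forall>z\<in>fst M. \<not> compatible M z y \<longrightarrow> z = x \<or> \<not> compatible M z x) \<or>
     (\<forall>z\<in>fst M. \<not> compatible M z x \<longrightarrow> z = y \<or> \<not> compatible M z y))"

lemma amalgamation_common_predecessor:
  assumes amalg: "amalgamation M"
    and "finite S" "S \<noteq> {}" "S \<subseteq> fst M" "clique (compatible M) S"
  shows "\<exists>a\<in>fst M. \<forall>s\<in>S. snd M a s"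
  using assms(2-5)
proof (induction S rule: finite_ne_induct)
  case (singleton x)
  then show ?case by (auto simp: clique_def compatible_def)
next
  case (insert x F)
  then obtain a where a: "a \<in> fst M" "\<forall>s\<in>F. snd M a s"
    by (auto simp: clique_def)
  have x: "x \<in> fst M" "compatible M x x" "\<forall>s\<in>F. compatible M s x"
    using insert.prems by (auto simp: clique_def)
  then obtain a' where a': "a' \<in> fst M" "snd M a' x"
      "\<forall>b\<in>fst M. snd M a b \<and> compatible M b x \<longrightarrow> snd M a' b"
    using amalg a(1) unfolding amalgamation_def by blast
  have "\<forall>s\<in>F. snd M a' s"
    using a' a x insert.prems(1) by blast
  with a' show ?case by auto
qed

text \<open>Each incompatible pair (x, y) across the two cliques is determined by y or by x,
  so these pairs inject into the disjoint union of the cliques.\<close>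
lemma sparse_incompatibility_few_cross_nonedges:
  assumes sparse: "sparse_incompatibility M"
  shows "few_cross_nonedges (compatible M) (fst M)"
  unfolding few_cross_nonedges_def
proof (intro allI impI)
  fix P Q assume fin: "finite P" "finite Q" and sub: "P \<subseteq> fst M" "Q \<subseteq> fst M"
    and cP: "clique (compatible M) P" and cQ: "clique (compatible M) Q"
  define E where "E = {(x, y) \<in> P \<times> Q. \<not> compatible M x y}"
  define E1 where "E1 = {(x, y) \<in> E. \<forall>z\<in>fst M. \<not> compatible M z y \<longrightarrow> z = x \<or> \<not> compatible M z x}"
  define E2 where "E2 = {(x, y) \<in> E. \<forall>z\<in>fst M. \<not> compatible M z x \<longrightarrow> z = y \<or> \<not> compatible M z y}"
  have "E \<subseteq> E1 \<union> E2"
    using sparse sub unfolding sparse_incompatibility_def E_def E1_def E2_def by blast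
  have "inj_on snd E1"
  proof (rule inj_onI)
    fix e e' assume "e \<in> E1" "e' \<in> E1" "snd e = snd e'"
    then obtain x x' y where xy: "e = (x, y)" "e' = (x', y)" by (cases e, cases e') auto
    have "x \<in> P" "x' \<in> P" "\<not> compatible M x' y"
      "\<forall>z\<in>fst M. \<not> compatible M z y \<longrightarrow> z = x \<or> \<not> compatible M z x"
      using \<open>e \<in> E1\<close> \<open>e' \<in> E1\<close> xy by (auto simp: E1_def E_def)
    then show "e = e'" using cP sub xy by (auto simp: clique_def)
  qed
  then have "card E1 \<le> card Q"
    by (rule card_inj_on_le) (auto simp: E1_def E_def fin)
  have "inj_on fst E2"
  proof (rule inj_onI)
    fix e e' assume "e \<in> E2" "e' \<in> E2" "fst e = fst e'"
    then obtain x y y' where xy: "e = (x, y)" "e' = (x, y')" by (cases e, cases e') auto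
    have "y \<in> Q" "y' \<in> Q" "\<not> compatible M y' x"
      "\<forall>z\<in>fst M. \<not> compatible M z x \<longrightarrow> z = y \<or> \<not> compatible M z y"
      using \<open>e \<in> E2\<close> \<open>e' \<in> E2\<close> xy by (auto simp: E2_def E_def dest: compatible_sym)
    then show "e = e'" using cQ sub xy by (auto simp: clique_def)
  qed
  then have "card E2 \<le> card P"
    by (rule card_inj_on_le) (auto simp: E2_def E_def fin)
  have "finite E1" "finite E2"
    by (rule finite_subset[of _ "P \<times> Q"], auto simp: E1_def E2_def E_def fin)+
  then have "card E \<le> card E1 + card E2"
    using \<open>E \<subseteq> E1 \<union> E2\<close> card_Un_le card_mono finite_UnI order_trans by metis
  with \<open>card E1 \<le> card Q\<close> \<open>card E2 \<le> card P\<close> show "card E \<le> card P + card Q"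
    by linarith
qed

definition Forall :: "nat \<Rightarrow> fm \<Rightarrow> fm" where
  "Forall i p = Neg (Ex i (Neg p))"

definition Imp :: "fm \<Rightarrow> fm \<Rightarrow> fm" where
  "Imp p q = Neg (Conj p (Neg q))"

definition Disj :: "fm \<Rightarrow> fm \<Rightarrow> fm" where
  "Disj p q = Neg (Conj (Neg p) (Neg q))"

definition Compat :: "nat \<Rightarrow> nat \<Rightarrow> nat \<Rightarrow> fm" where
  "Compat u v w = Ex w (Conj (Rel w u) (Rel w v))"

lemma sat_Forall [simp]: "sat M e (Forall i p) \<longleftrightarrow> (\<forall>a\<in>fst M. sat M (e(i := a)) p)"
  by (simp add: Forall_def)

lemma sat_Imp [simp]: "sat M e (Imp p q) \<longleftrightarrow> (sat M e p \<longrightarrow> sat M e q)"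
  by (simp add: Imp_def)

lemma sat_Disj [simp]: "sat M e (Disj p q) \<longleftrightarrow> sat M e p \<or> sat M e q"
  by (simp add: Disj_def)

lemma sat_Compat [simp]: "w \<noteq> u \<Longrightarrow> w \<noteq> v \<Longrightarrow> sat M e (Compat u v w) \<longleftrightarrow> compatible M (e u) (e v)"
  by (simp add: Compat_def compatible_def)

lemma fv_derived [simp]:
  "fv (Forall i p) = fv p - {i}" "fv (Imp p q) = fv p \<union> fv q" "fv (Disj p q) = fv p \<union> fv q"
  "fv (Compat u v w) = {u, v} - {w}"
  by (auto simp: Forall_def Imp_def Disj_def Compat_def)

definition amalgamation_fm :: fm where
  "amalgamation_fm = Forall 0 (Forall 1 (Imp (Compat 1 1 2)
     (Ex 3 (Conj (Rel 3 1) (Forall 4 (Imp (Conj (Rel 0 4) (Compat 4 1 5)) (Rel 3 4)))))))"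

definition sparse_incompatibility_fm :: fm where
  "sparse_incompatibility_fm = Forall 0 (Forall 1 (Imp (Neg (Compat 0 1 2))
     (Disj (Forall 3 (Imp (Neg (Compat 3 1 4)) (Disj (Eq 3 0) (Neg (Compat 3 0 4)))))
           (Forall 3 (Imp (Neg (Compat 3 0 4)) (Disj (Eq 3 1) (Neg (Compat 3 1 4))))))))"

lemma sentence_amalgamation_fm: "sentence amalgamation_fm"
  by (auto simp: sentence_def amalgamation_fm_def)

lemma sentence_sparse_incompatibility_fm: "sentence sparse_incompatibility_fm"
  by (auto simp: sentence_def sparse_incompatibility_fm_def)

lemma sat_amalgamation_fm: "sat M e amalgamation_fm \<longleftrightarrow> amalgamation M"
  by (simp add: amalgamation_fm_def amalgamation_def)

lemma sat_sparse_incompatibility_fm: "sat M e sparse_incompatibility_fm \<longleftrightarrow> sparse_incompatibility M"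
  by (simp add: sparse_incompatibility_fm_def sparse_incompatibility_def)

lemma model_of_Th_sat:
  assumes "is_model_of M (Th N)" "sentence phi" "true_in N phi"
  shows "\<exists>e. sat M e phi"
proof -
  from assms(1) obtain u where u: "u \<in> fst M" by (auto simp: is_model_of_def)
  have "true_in M phi" using assms by (simp add: is_model_of_def Th_def)
  then have "sat M (\<lambda>_. u) phi" using u unfolding true_in_def by simp
  then show ?thesis by blast
qed

section \<open>The structure C\<close>

lemma finite_seqs_below: "finite (seqs_below n)"
proof -
  have "seqs_below n \<subseteq> {xs :: bool list. set xs \<subseteq> UNIV \<and> length xs \<le> n}"
    by (auto simp: seqs_below_def)
  then show ?thesis using finite_lists_length_le[of "UNIV :: bool set" n] finite_subset by auto
qed

lemma finite_antichain_extends_to_maximal: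
  assumes "finite X" "antichain X"
  obtains n Y where "X \<subseteq> Y" "maximal_antichain_in Y (seqs_below n)"
proof -
  define n where "n = Suc (Max (insert 0 (length ` X)))"
  have "X \<subseteq> seqs_below n"
    using assms(1) by (auto simp: seqs_below_def n_def less_Suc_eq_le)
  define F where "F = {Y. X \<subseteq> Y \<and> Y \<subseteq> seqs_below n \<and> antichain Y}"
  have "finite F" unfolding F_def
    by (rule finite_subset[of _ "Pow (seqs_below n)"]) (auto simp: finite_seqs_below)
  moreover have "X \<in> F" using \<open>X \<subseteq> seqs_below n\<close> assms(2) unfolding F_def by blast
  ultimately obtain Y where Y: "Y \<in> F" "\<And>Z. Z \<in> F \<Longrightarrow> Y \<subseteq> Z \<Longrightarrow> Y = Z"
    using finite_has_maximal by (metis empty_iff)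
  then have "maximal_antichain_in Y (seqs_below n)"
    unfolding maximal_antichain_in_def F_def by blast
  with Y(1) show thesis unfolding F_def by (blast intro: that)
qed

lemma Aelt_in_C_univ: "Aelt X \<in> C_univ \<longleftrightarrow> (\<exists>n. maximal_antichain_in X (seqs_below n))"
  by (auto simp: C_univ_def)

lemma compatible_C_iff:
  "compatible C u v \<longleftrightarrow> (\<exists>s t. u = Belt s \<and> v = Belt t \<and> (s = t \<or> incomparable s t))"
proof
  assume "compatible C u v"
  then obtain X where X: "Aelt X \<in> C_univ" "C_rel (Aelt X) u" "C_rel (Aelt X) v"
    by (auto simp: compatible_def C_def elim!: C_rel.elims)
  then obtain s t where st: "u = Belt s" "v = Belt t" "s \<in> X" "t \<in> X"
    by (auto elim!: C_rel.elims)
  moreover have "antichain X" using X(1) by (auto simp: Aelt_in_C_univ maximal_antichain_in_def)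
  ultimately show "\<exists>s t. u = Belt s \<and> v = Belt t \<and> (s = t \<or> incomparable s t)"
    unfolding antichain_def by blast
next
  assume "\<exists>s t. u = Belt s \<and> v = Belt t \<and> (s = t \<or> incomparable s t)"
  then obtain s t where st: "u = Belt s" "v = Belt t" "s = t \<or> incomparable s t" by blast
  have "finite {s, t}" by simp
  moreover have "antichain {s, t}" using st(3) by (auto simp: antichain_def incomparable_def)
  ultimately obtain n Y where "{s, t} \<subseteq> Y" "maximal_antichain_in Y (seqs_below n)"
    by (rule finite_antichain_extends_to_maximal)
  then show "compatible C u v"
    using st unfolding compatible_def C_def by (auto simp: Aelt_in_C_univ intro!: bexI[of _ "Aelt Y"])
qed

lemma compatible_C_Belt: "compatible C (Belt s) (Belt t) \<longleftrightarrow> s = t \<or> incomparable s t"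
  by (simp add: compatible_C_iff)

lemma not_compatible_C_Aelt: "\<not> compatible C (Aelt X) v" "\<not> compatible C u (Aelt X)"
  by (simp_all add: compatible_C_iff)

lemma C_successors_finite_antichain:
  assumes "a \<in> C_univ"
  shows "finite {s. C_rel a (Belt s)} \<and> antichain {s. C_rel a (Belt s)}"
proof (cases a)
  case (Aelt X)
  then obtain n where "maximal_antichain_in X (seqs_below n)"
    using assms by (auto simp: Aelt_in_C_univ)
  then have "X \<subseteq> seqs_below n" "antichain X" by (auto simp: maximal_antichain_in_def)
  then show ?thesis using Aelt finite_subset finite_seqs_below by auto
next
  case (Belt s)
  then show ?thesis by (simp add: antichain_def)
qed

lemma amalgamation_C: "amalgamation C"
  unfolding amalgamation_def
proof (intro ballI impI)
  fix a y assume a: "a \<in> fst C" and "compatible C y y"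
  then obtain t where t: "y = Belt t" by (auto simp: compatible_C_iff)
  define Z where "Z = insert t {s. C_rel a (Belt s) \<and> incomparable s t}"
  have "finite Z" "antichain Z"
    using C_successors_finite_antichain[of a] a
    by (auto simp: Z_def C_def antichain_def incomparable_def elim: finite_subset[rotated])
  then obtain n Y where Y: "Z \<subseteq> Y" "maximal_antichain_in Y (seqs_below n)"
    by (rule finite_antichain_extends_to_maximal)
  show "\<exists>a'\<in>fst C. snd C a' y \<and> (\<forall>b\<in>fst C. snd C a b \<and> compatible C b y \<longrightarrow> snd C a' b)"
  proof (intro bexI[of _ "Aelt Y"] conjI ballI impI)
    show "Aelt Y \<in> fst C" using Y(2) by (auto simp: C_def Aelt_in_C_univ)
    show "snd C (Aelt Y) y" using Y(1) t by (auto simp: C_def Z_def)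
  next
    fix b assume b: "snd C a b \<and> compatible C b y"
    then obtain s where s: "b = Belt s" "s = t \<or> incomparable s t" using t by (auto simp: compatible_C_iff)
    then have "s \<in> Z" using b by (auto simp: C_def Z_def)
    then show "snd C (Aelt Y) b" using Y(1) s(1) by (auto simp: C_def)
  qed
qed

lemma incompatible_C_strict_prefix:
  assumes "strict_prefix s t" "\<not> compatible C z (Belt t)"
  shows "z = Belt s \<or> \<not> compatible C z (Belt s)"
proof (cases z)
  case (Aelt X)
  then show ?thesis by (simp add: not_compatible_C_Aelt)
next
  case (Belt u)
  then have "prefix u t \<or> prefix t u" using assms(2) by (auto simp: compatible_C_Belt incomparable_def)
  then have "prefix u s \<or> prefix s u"
    using assms(1) prefix_same_cases prefix_order.trans by (auto simp: strict_prefix_def)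
  then show ?thesis using Belt by (auto simp: compatible_C_Belt incomparable_def)
qed

lemma sparse_incompatibility_C: "sparse_incompatibility C"
  unfolding sparse_incompatibility_def
proof (intro ballI impI)
  fix x y assume incompatible: "\<not> compatible C x y"
  show "(\<forall>z\<in>fst C. \<not> compatible C z y \<longrightarrow> z = x \<or> \<not> compatible C z x) \<or>
        (\<forall>z\<in>fst C. \<not> compatible C z x \<longrightarrow> z = y \<or> \<not> compatible C z y)"
  proof (cases "\<exists>s t. x = Belt s \<and> y = Belt t")
    case True
    then obtain s t where st: "x = Belt s" "y = Belt t" by blast
    with incompatible have "strict_prefix s t \<or> strict_prefix t s"
      by (auto simp: compatible_C_Belt incomparable_def strict_prefix_def)
    then show ?thesis
      using incompatible_C_strict_prefix st by blast
  next
    case False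
    then have "(\<exists>X. x = Aelt X) \<or> (\<exists>X. y = Aelt X)" by (meson celt.exhaust)
    then show ?thesis by (auto simp: not_compatible_C_Aelt)
  qed
qed

lemma model_of_Th_C:
  assumes "is_model_of M (Th C)"
  shows "amalgamation M" "sparse_incompatibility M"
proof -
  have "true_in C amalgamation_fm" "true_in C sparse_incompatibility_fm"
    by (simp_all add: true_in_def sat_amalgamation_fm amalgamation_C
        sat_sparse_incompatibility_fm sparse_incompatibility_C)
  then show "amalgamation M" "sparse_incompatibility M"
    using model_of_Th_sat[OF assms] sentence_amalgamation_fm sentence_sparse_incompatibility_fm
      sat_amalgamation_fm sat_sparse_incompatibility_fm by metis+
qed

section \<open>SOP_2 witnesses as tree patterns\<close>

lemma sat_conjR: "sat M (asg a p) (conjR k) \<longleftrightarrow> (\<forall>i<k. snd M a (p i))"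
  by (induction k) (auto simp: asg_def less_Suc_eq)

lemma prefix_on_common_branch:
  assumes "prefix eta nu"
  obtains f where "restr f (length eta) = eta" "restr f (length nu) = nu"
proof
  define f where "f m = (if m < length nu then nu ! m else False)" for m
  obtain r where r: "nu = eta @ r" using assms by (rule prefixE)
  show "restr f (length eta) = eta" "restr f (length nu) = nu"
    unfolding restr_def f_def by (auto intro!: nth_equalityI simp: r nth_append)
qed

lemma sop2_witness_pattern:
  assumes amalg: "amalgamation M" and "n \<ge> 1" and witness: "sop2_witness_in M (conjR n) n c"
  shows "sop2_pattern (compatible M) (\<lambda>eta. c eta ` {..<n})"
proof -
  have comparable: "compatible M x y"
    if "prefix eta nu" "x \<in> c eta ` {..<n}" "y \<in> c nu ` {..<n}" for eta nu x y
  proof -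
    obtain f where f: "restr f (length eta) = eta" "restr f (length nu) = nu"
      using \<open>prefix eta nu\<close> by (rule prefix_on_common_branch)
    obtain a where "a \<in> fst M" "\<forall>m\<in>{length eta, length nu}. sat M (asg a (c (restr f m))) (conjR n)"
      using witness unfolding sop2_witness_in_def by (meson finite.emptyI finite.insertI)
    with f that(2,3) show ?thesis by (auto simp: sat_conjR compatible_def)
  qed
  have incomparable: "\<exists>x\<in>c eta ` {..<n}. \<exists>y\<in>c nu ` {..<n}. \<not> compatible M x y"
    if "incomparable eta nu" for eta nu
  proof (rule ccontr)
    assume cross: "\<not> ?thesis"
    define S where "S = c eta ` {..<n} \<union> c nu ` {..<n}"
    have cross': "compatible M x y" if "x \<in> c eta ` {..<n}" "y \<in> c nu ` {..<n}" for x y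
      using cross that by blast
    have "compatible M x y" if "x \<in> S" "y \<in> S" for x y
      using that unfolding S_def
      by (elim UnE) (auto intro: comparable cross' compatible_sym[OF cross'])
    then have "clique (compatible M) S"
      unfolding clique_def by blast
    moreover have "finite S" "S \<noteq> {}" "S \<subseteq> fst M"
      using \<open>n \<ge> 1\<close> witness by (auto simp: S_def sop2_witness_in_def lessThan_empty_iff)
    ultimately obtain a where "a \<in> fst M" "\<forall>s\<in>S. snd M a s"
      using amalgamation_common_predecessor[OF amalg] by blast
    moreover have "\<not> (\<exists>a\<in>fst M. sat M (asg a (c eta)) (conjR n) \<and> sat M (asg a (c nu)) (conjR n))"
      using witness \<open>incomparable eta nu\<close> unfolding sop2_witness_in_def by blast
    ultimately show False by (auto simp: sat_conjR S_def)
  qed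
  show ?thesis
    unfolding sop2_pattern_def using comparable incomparable by blast
qed

theorem proposition6p5:
  fixes M :: "'m rstruct" and n :: nat
  assumes "n \<ge> 1"
    and "is_model_of M (Th C)"
  shows "\<not> (\<exists>c. sop2_witness_in M (conjR n) n c)"
proof
  assume "\<exists>c. sop2_witness_in M (conjR n) n c"
  then obtain c where witness: "sop2_witness_in M (conjR n) n c" ..
  define X where "X eta = c eta ` {..<n}" for eta
  have "sop2_pattern (compatible M) X"
    unfolding X_def using model_of_Th_C(1)[OF assms(2)] assms(1) witness
    by (rule sop2_witness_pattern)
  moreover have "\<not> sop2_pattern (compatible M) X"
  proof (rule no_bounded_sop2_pattern)
    show "few_cross_nonedges (compatible M) (fst M)"
      using model_of_Th_C(2)[OF assms(2)] by (rule sparse_incompatibility_few_cross_nonedges)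
    show "finite (X eta)" "X eta \<subseteq> fst M" for eta
      using witness by (auto simp: X_def sop2_witness_in_def)
    show "card (X eta) \<le> n" for eta
      using card_image_le[of "{..<n}" "c eta"] by (simp add: X_def)
  qed (rule compatible_sym)
  ultimately show False by contradiction
qed

end
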